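(* Let $A$ be a $K$-algebra and let $A[y_1;\sigma_1,d_1][y_2;\sigma_2,d_2]$ be an iterated Ore extension such that $\sigma_2(A)\subseteq A$ and $\sigma_2(y_1)=py_1+q$ for some $p\in K^*$ and $q\in A$. Then $\sigma_1\sigma_2(a)=\sigma_2\sigma_1(a)$ for all $a\in A$.
   Context: $K$ is a field, $K^*$ its group of units. For a $K$-algebra $R$, an algebra endomorphism $\sigma$ of $R$ and a $\sigma$-derivation $d$ of $R$ (a $K$-linear map with $d(ab)=\sigma(a)d(b)+d(a)b$), the Ore extension $R[x;\sigma,d]$ is the free left $R$-module with basis $\{x^i\}_{i\ge0}$ with associative multiplication extending that of $R$ and satisfying $xr=\sigma(r)x+d(r)$ for $r\in R$. An iterated Ore extension $A[y_1;\sigma_1,d_1][y_2;\sigma_2,d_2]$ is an Ore extension of $R=A[y_1;\sigma_1,d_1]$, where $\sigma_2,d_2$ are an endomorphism and a $\sigma_2$-derivation of $R$. *)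

theory Defs
  imports Main
begin

text \<open>Conventions: everything lives inside one ambient ring (a type 'r), which is the
iterated Ore extension itself (carrier UNIV).\<close>

definition field_emb :: "('k::field \<Rightarrow> 'r::ring_1) \<Rightarrow> bool" where
  "field_emb emb \<longleftrightarrow> inj emb \<and> emb 1 = 1 \<and>
     (\<forall>a b. emb (a + b) = emb a + emb b) \<and> (\<forall>a b. emb (a * b) = emb a * emb b)"

definition subring :: "'r::ring_1 set \<Rightarrow> bool" where
  "subring S \<longleftrightarrow> 0 \<in> S \<and> 1 \<in> S \<and>
     (\<forall>a\<in>S. \<forall>b\<in>S. a + b \<in> S \<and> a - b \<in> S \<and> a * b \<in> S)"

definition K_algebra :: "('k::field \<Rightarrow> 'r::ring_1) \<Rightarrow> 'r set \<Rightarrow> bool" where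
  "K_algebra emb A \<longleftrightarrow> subring A \<and> range emb \<subseteq> A \<and>
     (\<forall>c. \<forall>a\<in>A. emb c * a = a * emb c)"

definition alg_endo :: "('k::field \<Rightarrow> 'r::ring_1) \<Rightarrow> 'r set \<Rightarrow> ('r \<Rightarrow> 'r) \<Rightarrow> bool" where
  "alg_endo emb R \<sigma> \<longleftrightarrow> \<sigma> ` R \<subseteq> R \<and> \<sigma> 1 = 1 \<and>
     (\<forall>a\<in>R. \<forall>b\<in>R. \<sigma> (a + b) = \<sigma> a + \<sigma> b \<and> \<sigma> (a * b) = \<sigma> a * \<sigma> b) \<and>
     (\<forall>c. \<forall>a\<in>R. \<sigma> (emb c * a) = emb c * \<sigma> a)"

definition sigma_derivation :: "('k::field \<Rightarrow> 'r::ring_1) \<Rightarrow> 'r set \<Rightarrow> ('r \<Rightarrow> 'r) \<Rightarrow> ('r \<Rightarrow> 'r) \<Rightarrow> bool" where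
  "sigma_derivation emb R \<sigma> d \<longleftrightarrow> d ` R \<subseteq> R \<and>
     (\<forall>a\<in>R. \<forall>b\<in>R. d (a + b) = d a + d b \<and> d (a * b) = \<sigma> a * d b + d a * b) \<and>
     (\<forall>c. \<forall>a\<in>R. d (emb c * a) = emb c * d a)"

definition ore_ext :: "('k::field \<Rightarrow> 'r::ring_1) \<Rightarrow> 'r set \<Rightarrow> ('r \<Rightarrow> 'r) \<Rightarrow> ('r \<Rightarrow> 'r) \<Rightarrow> 'r \<Rightarrow> 'r set \<Rightarrow> bool" where
  "ore_ext emb R \<sigma> d x S \<longleftrightarrow>
     subring R \<and> subring S \<and> R \<subseteq> S \<and> x \<in> S \<and>
     alg_endo emb R \<sigma> \<and> sigma_derivation emb R \<sigma> d \<and>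
     (\<forall>r\<in>R. x * r = \<sigma> r * x + d r) \<and>
     (\<forall>s\<in>S. \<exists>n c. (\<forall>i<n. c i \<in> R) \<and> s = (\<Sum>i<n. c i * x ^ i)) \<and>
     (\<forall>n c. (\<forall>i<n. c i \<in> R) \<longrightarrow> (\<Sum>i<n. c i * x ^ i) = 0 \<longrightarrow> (\<forall>i<n. c i = 0))"

end

theory Submission
  imports Defs
begin

text \<open>Apply \<sigma>2 to the commutation rule y1 a = \<sigma>1(a) y1 + d1(a). Rewriting
\<sigma>2(y1) \<sigma>2(a) = (p y1 + q) \<sigma>2(a) on the left and \<sigma>2(\<sigma>1 a) (p y1 + q) + \<sigma>2(d1 a)
on the right, both sides are polynomials of degree one in y1 with coefficients in A,
whose y1-coefficients are p \<sigma>1\<sigma>2(a) and \<sigma>2\<sigma>1(a) p. Freeness of A[y1] over A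
makes them equal, and p is a central unit.\<close>

lemma ore_ext_linear_coeff_unique:
  assumes "ore_ext emb R \<sigma> d x S"
    and "u \<in> R" "v \<in> R" "u' \<in> R" "v' \<in> R"
    and "u * x + v = u' * x + v'"
  shows "u = u'"
proof -
  have subR: "subring R"
    and free: "\<And>n c. \<forall>i<n. c i \<in> R \<Longrightarrow> (\<Sum>i<n. c i * x ^ i) = 0 \<Longrightarrow> \<forall>i<n. c i = 0"
    using assms(1) unfolding ore_ext_def by auto
  define c where "c = (\<lambda>i::nat. if i = 0 then v - v' else u - u')"
  have "\<forall>i<2. c i \<in> R"
    using subR assms(2-5) unfolding subring_def c_def by auto
  moreover have "(\<Sum>i<2. c i * x ^ i) = 0"
    using assms(6) by (simp add: c_def numeral_2_eq_2 algebra_simps)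
  ultimately have "c 1 = 0" using free by auto
  then show ?thesis by (simp add: c_def)
qed

lemma ore_ext_endo_twisted_commute:
  assumes ore: "ore_ext emb A \<sigma> d x R"
    and hom: "\<forall>a\<in>R. \<forall>b\<in>R. \<tau> (a + b) = \<tau> a + \<tau> b \<and> \<tau> (a * b) = \<tau> a * \<tau> b"
    and \<tau>A: "\<tau> ` A \<subseteq> A"
    and eq: "\<tau> x = e * x + q" and "e \<in> A" "q \<in> A"
    and aA: "a \<in> A"
  shows "e * \<sigma> (\<tau> a) = \<tau> (\<sigma> a) * e"
proof -
  have subA: "subring A" and AR: "A \<subseteq> R" and xR: "x \<in> R"
    and \<sigma>A: "\<sigma> ` A \<subseteq> A" and dA: "d ` A \<subseteq> A"
    and comm: "\<And>r. r \<in> A \<Longrightarrow> x * r = \<sigma> r * x + d r"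
    using ore unfolding ore_ext_def alg_endo_def sigma_derivation_def by auto
  have subR: "subring R" using ore unfolding ore_ext_def by auto
  have "\<tau> a \<in> A" "\<sigma> a \<in> A" "d a \<in> A" using aA \<tau>A \<sigma>A dA by auto
  then have in_A: "\<sigma> (\<tau> a) \<in> A" "d (\<tau> a) \<in> A" "\<tau> (\<sigma> a) \<in> A" "\<tau> (d a) \<in> A"
    using \<tau>A \<sigma>A dA by auto
  have "\<tau> (x * a) = (e * x + q) * \<tau> a"
    using hom xR aA AR eq by auto
  also have "\<dots> = (e * \<sigma> (\<tau> a)) * x + (e * d (\<tau> a) + q * \<tau> a)"
    using comm \<open>\<tau> a \<in> A\<close> by (simp add: algebra_simps)
  finally have lhs: "\<tau> (x * a) = (e * \<sigma> (\<tau> a)) * x + (e * d (\<tau> a) + q * \<tau> a)" .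
  have "\<sigma> a * x \<in> R" using subR \<open>\<sigma> a \<in> A\<close> AR xR unfolding subring_def by blast
  moreover have "d a \<in> R" "\<sigma> a \<in> R" using \<open>\<sigma> a \<in> A\<close> \<open>d a \<in> A\<close> AR by auto
  ultimately have "\<tau> (x * a) = \<tau> (\<sigma> a) * (e * x + q) + \<tau> (d a)"
    using comm[OF aA] hom xR eq by simp
  then have rhs: "\<tau> (x * a) = (\<tau> (\<sigma> a) * e) * x + (\<tau> (\<sigma> a) * q + \<tau> (d a))"
    by (simp add: algebra_simps)
  show ?thesis
  proof (rule ore_ext_linear_coeff_unique[OF ore])
    show "e * \<sigma> (\<tau> a) * x + (e * d (\<tau> a) + q * \<tau> a)
        = \<tau> (\<sigma> a) * e * x + (\<tau> (\<sigma> a) * q + \<tau> (d a))"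
      using lhs rhs by simp
  qed (use subA in_A \<open>\<tau> a \<in> A\<close> \<open>e \<in> A\<close> \<open>q \<in> A\<close> in \<open>auto simp: subring_def\<close>)
qed

lemma field_emb_mult_left_cancel:
  assumes "field_emb emb" and "c \<noteq> 0" and "emb c * a = emb c * b"
  shows "a = b"
proof -
  have inv: "emb (inverse c) * emb c = 1"
    using assms(1,2) unfolding field_emb_def by (metis field_class.field_inverse)
  have "emb (inverse c) * (emb c * a) = emb (inverse c) * (emb c * b)"
    using assms(3) by simp
  then show ?thesis by (simp add: mult.assoc[symmetric] inv)
qed

theorem lemma2p1:
  fixes emb :: "'k::field \<Rightarrow> 'r::ring_1"
    and A R :: "'r set" and \<sigma>1 d1 \<sigma>2 d2 :: "'r \<Rightarrow> 'r"
    and y1 y2 q :: 'r and p :: 'k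
  assumes "field_emb emb"
    and "K_algebra emb A"
    and "ore_ext emb A \<sigma>1 d1 y1 R"
    and "ore_ext emb R \<sigma>2 d2 y2 UNIV"
    and "\<sigma>2 ` A \<subseteq> A"
    and "p \<noteq> 0" and "q \<in> A"
    and "\<sigma>2 y1 = emb p * y1 + q"
  shows "\<forall>a\<in>A. \<sigma>1 (\<sigma>2 a) = \<sigma>2 (\<sigma>1 a)"
proof
  fix a assume aA: "a \<in> A"
  have hom2: "\<forall>a\<in>R. \<forall>b\<in>R. \<sigma>2 (a + b) = \<sigma>2 a + \<sigma>2 b \<and> \<sigma>2 (a * b) = \<sigma>2 a * \<sigma>2 b"
    using assms(4) unfolding ore_ext_def alg_endo_def by auto
  have pA: "emb p \<in> A" and central: "\<And>x. x \<in> A \<Longrightarrow> x * emb p = emb p * x"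
    using assms(2) unfolding K_algebra_def by auto
  have "\<sigma>1 ` A \<subseteq> A"
    using assms(3) unfolding ore_ext_def alg_endo_def by simp
  then have "\<sigma>2 (\<sigma>1 a) \<in> A"
    using assms(5) aA by blast
  have "emb p * \<sigma>1 (\<sigma>2 a) = \<sigma>2 (\<sigma>1 a) * emb p"
    using ore_ext_endo_twisted_commute[OF assms(3) hom2 assms(5,8) pA assms(7) aA] .
  also have "\<dots> = emb p * \<sigma>2 (\<sigma>1 a)"
    using central \<open>\<sigma>2 (\<sigma>1 a) \<in> A\<close> by simp
  finally show "\<sigma>1 (\<sigma>2 a) = \<sigma>2 (\<sigma>1 a)"
    using field_emb_mult_left_cancel[OF assms(1,6)] by blast
qed

end
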